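(* In Ruleset C', let $G=\langle \mathrm{Nim}(i_1),\ldots,\mathrm{Nim}(i_\ell)\rangle_{C'}$ and $k=\max_{1\le j\le\ell} i_j$. Then, taking the first applicable case, \[G\equiv\begin{cases} 0 & \text{if } G=\langle\mathrm{Nim}(1),\mathrm{Nim}(2)\rangle_{C'} \text{ or } G=\langle\mathrm{Nim}(0),\mathrm{Nim}(1),\mathrm{Nim}(2)\rangle_{C'},\\ * & \text{if } k=1,\\ *(k-1) & \text{if } k-1\in\{i_1,\ldots,i_\ell\},\\ *k & \text{otherwise.}\end{cases}\] Equivalently: $G$ has value $*k$ unless $\mathrm{Nim}(k-1)$ belongs to the superposition, in which case it has value $*(k-1)$, with the only exceptions $\langle\mathrm{Nim}(0),\mathrm{Nim}(1)\rangle_{C'}\equiv *$ and $\langle\mathrm{Nim}(1),\mathrm{Nim}(2)\rangle_{C'}\equiv 0$ (and likewise $\langle\mathrm{Nim}(0),\mathrm{Nim}(1),\mathrm{Nim}(2)\rangle_{C'}\equiv 0$).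
   Context: Single-heap Nim: $\mathrm{Nim}(x)$ is a heap of $x$ tokens; classical move $(1,-j)$, $j\ge1$, removes $j$ tokens and is illegal if fewer than $j$ tokens remain. Quantum variation: a position is a nonempty finite set $\langle G_1,\ldots,G_n\rangle$ of distinct classical positions; a classical move is legal if legal in some $G_i$; a Q-move is a nonempty set of legal classical moves, leading to the superposition of all legal results of applying one of its moves to one of the $G_i$. Ruleset C' (subscript $C'$): Q-moves of at least two distinct classical moves are allowed; an unsuperposed (single) move is allowed if and only if it is legal in every $G_i$ in which the player still has at least one legal classical move. The player with no allowed Q-move loses. $\equiv$ is game equivalence, $*k$ the value of a classical Nim heap of $k$ tokens, $*=*1$, $*0=0$. *)

theory Defs
  imports Main
begin

text \<open>A quantum position is a nonempty finite set S of heap sizes (the superposed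
  classical positions Nim(x), x in S).  A classical move j (removing j tokens,
  j \<ge> 1) is legal in Nim(x) iff j \<le> x.\<close>

definition qpos :: "nat set \<Rightarrow> bool" where
  "qpos S \<longleftrightarrow> finite S \<and> S \<noteq> {}"

definition legal_move :: "nat set \<Rightarrow> nat \<Rightarrow> bool" where
  "legal_move S j \<longleftrightarrow> 1 \<le> j \<and> (\<exists>x\<in>S. j \<le> x)"

text \<open>Allowed Q-moves in Ruleset C': a nonempty set M of legal classical moves
  such that either M contains at least two distinct moves, or M = {j} and j is
  legal in every component in which the player has at least one legal move
  (i.e. every component with x \<ge> 1).\<close>
definition allowed_C' :: "nat set \<Rightarrow> nat set \<Rightarrow> bool" where
  "allowed_C' S M \<longleftrightarrow> M \<noteq> {} \<and> (\<forall>j\<in>M. legal_move S j) \<and>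
     (2 \<le> card M \<or> (\<exists>j. M = {j} \<and> (\<forall>x\<in>S. 1 \<le> x \<longrightarrow> j \<le> x)))"

definition qresult :: "nat set \<Rightarrow> nat set \<Rightarrow> nat set" where
  "qresult S M = {x - j | x j. x \<in> S \<and> j \<in> M \<and> j \<le> x}"

definition options_C' :: "nat set \<Rightarrow> nat set set" where
  "options_C' S = {qresult S M | M. allowed_C' S M}"

definition mex :: "nat set \<Rightarrow> nat" where
  "mex A = (LEAST n. n \<notin> A)"

text \<open>Grundy value computed to recursion depth b; every option T of S satisfies
  Max T < Max S, so depth Suc (Max S) suffices.\<close>
fun grundy_depth :: "nat \<Rightarrow> nat set \<Rightarrow> nat" where
  "grundy_depth 0 S = 0"
| "grundy_depth (Suc b) S = mex (grundy_depth b ` options_C' S)"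

definition grundy_C' :: "nat set \<Rightarrow> nat" where
  "grundy_C' S = grundy_depth (Suc (Max S)) S"

end

theory Submission
  imports Defs
begin

text \<open>Induct on the largest heap k = Max S and check that the claimed value is the mex of
  the claimed values of the options, all of which have a smaller largest heap.  The Q-move
  {k - v, k} with 1 \<le> v < k leads to a superposition with largest heap v that contains
  Nim(0), and contains Nim(v - 1) exactly when v = 1 or Nim(k - 1) is in S; these options
  realise every smaller value except possibly 0, which is reached by the single move k when
  S \<subseteq> {0, k}, and otherwise by the pair {k - 2, k - 1}.  Conversely no option has the
  claimed value: values are bounded by the largest heap; if Nim(k - 1) is in S, an option
  containing Nim(k - 1) came from removing one token from Nim(k) and so also contains
  Nim(k - 2); and the superposition of Nim(1) and Nim(2) cannot be cleared to Nim(0) in one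
  move, so all options of the two exceptional positions have value 1.\<close>

definition grundy_formula :: "nat set \<Rightarrow> nat" where
  "grundy_formula S = (if S = {1, 2} \<or> S = {0, 1, 2} then 0
     else if Max S = 1 then 1
     else if Max S - 1 \<in> S then Max S - 1
     else Max S)"

lemma qpos_Max_in: "qpos S \<Longrightarrow> Max S \<in> S"
  by (simp add: qpos_def)

lemma qpos_Max_ge: "qpos S \<Longrightarrow> x \<in> S \<Longrightarrow> x \<le> Max S"
  by (simp add: qpos_def)

lemma mem_qresult_iff:
  "y \<in> qresult S M \<longleftrightarrow> (\<exists>x j. y = x - j \<and> x \<in> S \<and> j \<in> M \<and> j \<le> x)"
  by (auto simp: qresult_def)

lemma mem_options_C'_iff: "T \<in> options_C' S \<longleftrightarrow> (\<exists>M. allowed_C' S M \<and> T = qresult S M)"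
  by (auto simp: options_C'_def)

lemma allowed_C'_pair:
  assumes "qpos S" "1 \<le> i" "i < j" "j \<le> Max S"
  shows "allowed_C' S {i, j}"
proof -
  have "Max S \<in> S" using qpos_Max_in[OF assms(1)] .
  then show ?thesis
    using assms(2-4) by (auto simp: allowed_C'_def legal_move_def intro!: bexI[of _ "Max S"])
qed

lemma allowed_C'_moves_pos: "allowed_C' S M \<Longrightarrow> j \<in> M \<Longrightarrow> 1 \<le> j"
  by (simp add: allowed_C'_def legal_move_def)

lemma qresult_less_Max:
  assumes "qpos S" "allowed_C' S M" "y \<in> qresult S M"
  shows "y < Max S"
proof -
  obtain x j where "y = x - j" "x \<in> S" "j \<in> M" "j \<le> x"
    using assms(3) by (auto simp: mem_qresult_iff)
  moreover have "1 \<le> j" using allowed_C'_moves_pos assms(2) \<open>j \<in> M\<close> .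
  moreover have "x \<le> Max S" using qpos_Max_ge assms(1) \<open>x \<in> S\<close> .
  ultimately show ?thesis by linarith
qed

lemma qresult_nonempty:
  assumes "allowed_C' S M"
  shows "qresult S M \<noteq> {}"
proof -
  obtain j where "j \<in> M" using assms by (auto simp: allowed_C'_def)
  then obtain x where "x \<in> S" "j \<le> x" using assms by (auto simp: allowed_C'_def legal_move_def)
  then have "x - j \<in> qresult S M" using \<open>j \<in> M\<close> by (auto simp: mem_qresult_iff)
  then show ?thesis by blast
qed

lemma options_C'_qpos_Max_less:
  assumes "qpos S" "T \<in> options_C' S"
  shows "qpos T" "Max T < Max S"
proof -
  obtain M where M: "allowed_C' S M" "T = qresult S M"
    using assms(2) by (auto simp: mem_options_C'_iff)
  have "T \<subseteq> {..<Max S}" using qresult_less_Max[OF assms(1) M(1)] M(2) by auto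
  moreover have "T \<noteq> {}" using qresult_nonempty[OF M(1)] M(2) by simp
  ultimately show "qpos T" "Max T < Max S"
    by (auto simp: qpos_def finite_subset)
qed

lemma grundy_depth_eq_mex:
  "qpos S \<Longrightarrow> Max S < b \<Longrightarrow> grundy_depth b S = mex (grundy_C' ` options_C' S)"
proof (induction "Max S" arbitrary: S b rule: less_induct)
  case less
  obtain b' where b: "b = Suc b'" using less.prems(2) by (cases b) auto
  have "grundy_depth b' T = grundy_C' T" if T: "T \<in> options_C' S" for T
  proof -
    note T' = options_C'_qpos_Max_less[OF less.prems(1) T]
    have "grundy_depth b' T = mex (grundy_C' ` options_C' T)"
      using less.hyps[OF T'(2) T'(1)] less.prems(2) b T'(2) by simp
    moreover have "grundy_C' T = grundy_depth (Suc (Max T)) T"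
      by (simp only: grundy_C'_def)
    moreover have "grundy_depth (Suc (Max T)) T = mex (grundy_C' ` options_C' T)"
      by (rule less.hyps[OF T'(2) T'(1)]) simp
    ultimately show ?thesis by simp
  qed
  then show ?case using b by (simp cong: image_cong)
qed

lemma grundy_C'_eq_mex: "qpos S \<Longrightarrow> grundy_C' S = mex (grundy_C' ` options_C' S)"
  using grundy_depth_eq_mex[of S "Suc (Max S)"] by (simp only: grundy_C'_def lessI)

lemma mex_eqI: "v \<notin> A \<Longrightarrow> (\<And>m. m < v \<Longrightarrow> m \<in> A) \<Longrightarrow> mex A = v"
  unfolding mex_def by (rule Least_equality) (auto simp: not_less[symmetric])

lemma grundy_formula_le_Max: "grundy_formula T \<le> Max T"
  by (simp add: grundy_formula_def)

lemma grundy_formula_eq_MaxD: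
  "grundy_formula T = Max T \<Longrightarrow> 2 \<le> Max T \<Longrightarrow> Max T - 1 \<notin> T"
  by (auto simp: grundy_formula_def split: if_splits)

lemma grundy_formula_with_zero:
  assumes "qpos T" "0 \<in> T"
  shows "grundy_formula T = (if Max T = 2 \<and> 1 \<in> T then 0 else if Max T = 1 then 1
      else if Max T - 1 \<in> T then Max T - 1 else Max T)"
proof -
  have "T = {0, 1, 2} \<longleftrightarrow> Max T = 2 \<and> 1 \<in> T"
  proof
    assume "Max T = 2 \<and> 1 \<in> T"
    moreover have "x \<le> Max T" if "x \<in> T" for x using qpos_Max_ge[OF assms(1) that] .
    ultimately show "T = {0, 1, 2}" using qpos_Max_in[OF assms(1)] assms(2) by force
  qed simp
  moreover have "T \<noteq> {1, 2}" using assms(2) by auto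
  ultimately show ?thesis unfolding grundy_formula_def by auto
qed

lemma pair_move_option_C':
  assumes "qpos S" "1 \<le> v" "v < Max S"
  defines "T \<equiv> qresult S {Max S - v, Max S}"
  shows "T \<in> options_C' S" "0 \<in> T" "Max T = v"
    and "v - 1 \<in> T \<longleftrightarrow> v = 1 \<or> Max S - 1 \<in> S"
proof -
  define k where "k = Max S"
  have kS: "k \<in> S" and le_k: "\<And>x. x \<in> S \<Longrightarrow> x \<le> k"
    using qpos_Max_in qpos_Max_ge assms(1) unfolding k_def by auto
  have "allowed_C' S {k - v, k}"
    using allowed_C'_pair assms(1-3) unfolding k_def by simp
  then show T: "T \<in> options_C' S"
    unfolding T_def k_def mem_options_C'_iff by blast
  show "0 \<in> T" unfolding T_def mem_qresult_iff k_def[symmetric] using kS by force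
  have "v \<in> T" unfolding T_def mem_qresult_iff k_def[symmetric] using kS assms(3)
    by (intro exI[of _ k] exI[of _ "k - v"]) (auto simp: k_def)
  moreover have "y \<le> v" if "y \<in> T" for y
    using that assms(3) unfolding T_def mem_qresult_iff k_def[symmetric] by (auto dest: le_k)
  ultimately show "Max T = v"
    using options_C'_qpos_Max_less(1)[OF assms(1) T] by (auto simp: qpos_def intro: Max_eqI)
  show "v - 1 \<in> T \<longleftrightarrow> v = 1 \<or> Max S - 1 \<in> S"
  proof
    assume "v - 1 \<in> T"
    then obtain x j where x: "v - 1 = x - j" "x \<in> S" "j \<in> {k - v, k}" "j \<le> x"
      unfolding T_def mem_qresult_iff k_def[symmetric] by blast
    then have "v = 1 \<or> x = k - 1" using le_k[OF x(2)] assms(2,3) unfolding k_def by auto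
    then show "v = 1 \<or> Max S - 1 \<in> S" using x(2) k_def by auto
  next
    assume "v = 1 \<or> Max S - 1 \<in> S"
    then show "v - 1 \<in> T"
    proof
      assume "Max S - 1 \<in> S"
      then show ?thesis unfolding T_def mem_qresult_iff using assms(2,3)
        by (intro exI[of _ "Max S - 1"] exI[of _ "Max S - v"]) auto
    qed (use \<open>0 \<in> T\<close> in simp)
  qed
qed

lemma singleton_zero_in_options_C':
  assumes "qpos S" "1 \<le> Max S" "S \<subseteq> {0, Max S}"
  shows "{0} \<in> options_C' S"
proof -
  have "allowed_C' S {Max S}"
    using assms qpos_Max_in[OF assms(1)] by (auto simp: allowed_C'_def legal_move_def)
  moreover have "qresult S {Max S} = {0}"
    using assms(2,3) qpos_Max_in[OF assms(1)] by (force simp: mem_qresult_iff subset_iff)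
  ultimately show ?thesis unfolding mem_options_C'_iff by metis
qed

lemma ex_option_C'_one_two:
  assumes "qpos S" "3 \<le> Max S" "Max S - 1 \<notin> S"
  shows "\<exists>T\<in>options_C' S. T = {1, 2} \<or> T = {0, 1, 2}"
proof -
  define k where "k = Max S"
  define T where "T = qresult S {k - 2, k - 1}"
  have kS: "k \<in> S" and le_k: "\<And>x. x \<in> S \<Longrightarrow> x \<le> k"
    using qpos_Max_in qpos_Max_ge assms(1) unfolding k_def by auto
  have "allowed_C' S {k - 2, k - 1}"
    using allowed_C'_pair assms(1,2) unfolding k_def by simp
  then have "T \<in> options_C' S" unfolding T_def mem_options_C'_iff by blast
  moreover have "1 \<in> T" "2 \<in> T" unfolding T_def mem_qresult_iff using kS assms(2)
    by (intro exI[of _ k] exI[of _ "k - 1"] exI[of _ "k - 2"]; auto simp: k_def)+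
  moreover have "y \<in> {0, 1, 2}" if "y \<in> T" for y
  proof -
    obtain x j where "y = x - j" "x \<in> S" "j \<in> {k - 2, k - 1}" "j \<le> x"
      using \<open>y \<in> T\<close> unfolding T_def mem_qresult_iff by blast
    moreover have "x \<noteq> k - 1" using \<open>x \<in> S\<close> assms(3) k_def by auto
    ultimately show ?thesis using le_k by fastforce
  qed
  ultimately show ?thesis by blast
qed

text \<open>Two distinct moves leave a positive remainder in a component that admits the
  larger one, and a single move has to be legal in Nim(1).\<close>

lemma singleton_zero_notin_options_C':
  assumes "1 \<in> S" "2 \<in> S"
  shows "{0} \<notin> options_C' S"
proof
  assume "{0} \<in> options_C' S"
  then obtain M where M: "allowed_C' S M" "qresult S M = {0}"
    unfolding mem_options_C'_iff by metis
  have clears: "x = j" if "x \<in> S" "j \<in> M" "j \<le> x" for x j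
  proof -
    have "x - j \<in> qresult S M" using that by (auto simp: mem_qresult_iff)
    then show ?thesis using M(2) that(3) by simp
  qed
  obtain j where j: "j \<in> M" using M(1) by (auto simp: allowed_C'_def)
  have "M = {j}"
  proof (rule ccontr)
    assume "M \<noteq> {j}"
    then obtain i where "i \<in> M" "i \<noteq> j" using j by blast
    moreover obtain x where "x \<in> S" "max i j \<le> x"
      using M(1) \<open>i \<in> M\<close> j unfolding allowed_C'_def legal_move_def by (metis max_def)
    ultimately show False using clears j by (metis max.bounded_iff)
  qed
  then have "j \<le> 1" using M(1) assms(1) by (auto simp: allowed_C'_def)
  then have "j = 1" using allowed_C'_moves_pos[OF M(1) j] by simp
  then show False using clears[OF assms(2) j] by simp
qed

lemma option_C'_keeps_second_largest:
  assumes "qpos S" "2 \<le> Max S" "Max S - 1 \<in> S" "T \<in> options_C' S" "Max S - 1 \<in> T"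
  shows "Max S - 2 \<in> T"
proof -
  obtain M where M: "allowed_C' S M" "T = qresult S M"
    using assms(4) unfolding mem_options_C'_iff by blast
  then obtain x j where x: "Max S - 1 = x - j" "x \<in> S" "j \<in> M" "j \<le> x"
    using assms(5) unfolding M(2) mem_qresult_iff by blast
  have "j = 1"
    using x qpos_Max_ge[OF assms(1) x(2)] allowed_C'_moves_pos[OF M(1) x(3)] assms(2)
    by linarith
  then have "(Max S - 1) - 1 \<in> qresult S M"
    using assms(2,3) x(3) unfolding mem_qresult_iff by fastforce
  then show ?thesis using M(2) by (simp add: numeral_2_eq_2)
qed

lemma grundy_formula_cases:
  assumes "qpos S"
  obtains (exceptional) "S = {1, 2} \<or> S = {0, 1, 2}" "grundy_formula S = 0"
    | (zero) "S = {0}" "grundy_formula S = 0"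
    | (one) "Max S = 1" "grundy_formula S = 1"
    | (second) "3 \<le> Max S" "Max S - 1 \<in> S" "grundy_formula S = Max S - 1"
    | (top) "2 \<le> Max S" "Max S - 1 \<notin> S" "grundy_formula S = Max S"
proof (cases "S = {1, 2} \<or> S = {0, 1, 2}")
  case True
  then show ?thesis using exceptional by (simp add: grundy_formula_def)
next
  case False
  then have F: "grundy_formula S =
      (if Max S = 1 then 1 else if Max S - 1 \<in> S then Max S - 1 else Max S)"
    by (simp add: grundy_formula_def)
  consider "Max S = 0" | "Max S = 1" | "2 \<le> Max S" "Max S - 1 \<notin> S"
    | "2 \<le> Max S" "Max S - 1 \<in> S" by (cases "Max S - 1 \<in> S") linarith+
  then show ?thesis
  proof cases
    case 1
    then have "S = {0}" using qpos_Max_in[OF assms] qpos_Max_ge[OF assms] by fastforce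
    then show ?thesis using zero F 1 by simp
  next
    case 4
    have "Max S \<noteq> 2"
    proof
      assume "Max S = 2"
      then have "S \<subseteq> {0, 1, 2}" "1 \<in> S" "2 \<in> S"
        using qpos_Max_ge[OF assms] qpos_Max_in[OF assms] 4(2) by fastforce+
      then show False using False by auto
    qed
    then show ?thesis using second F 4 by simp
  qed (use one top F in simp_all)
qed

lemma exceptional_option_C'_value:
  assumes "S = {1, 2} \<or> S = {0, 1, 2}" "T \<in> options_C' S"
  shows "grundy_formula T = 1"
proof -
  have S: "qpos S" using assms(1) by (auto simp: qpos_def)
  note T = options_C'_qpos_Max_less[OF S assms(2)]
  have "1 \<in> S" "2 \<in> S" using assms(1) by auto
  then have "T \<noteq> {0}" using singleton_zero_notin_options_C' assms(2) by blast
  then have "Max T \<noteq> 0"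
    using qpos_Max_ge[OF T(1)] qpos_Max_in[OF T(1)] by fastforce
  moreover have "Max T < 2" using T(2) assms(1) by auto
  ultimately have "Max T = 1" by linarith
  then show ?thesis by (auto simp: grundy_formula_def)
qed

lemma second_largest_not_option_C'_value:
  assumes "qpos S" "3 \<le> Max S" "Max S - 1 \<in> S" "T \<in> options_C' S"
  shows "grundy_formula T \<noteq> Max S - 1"
proof
  assume F: "grundy_formula T = Max S - 1"
  note T = options_C'_qpos_Max_less[OF assms(1,4)]
  have Max_T: "Max T = Max S - 1" using grundy_formula_le_Max[of T] T(2) F by simp
  then have "Max S - 2 \<in> T"
    using option_C'_keeps_second_largest assms qpos_Max_in[OF T(1)] by simp
  moreover have "Max T - 1 \<notin> T"
    using grundy_formula_eq_MaxD[of T] F Max_T assms(2) by simp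
  ultimately show False using Max_T by (simp add: numeral_2_eq_2)
qed

lemma grundy_formula_neq_option:
  assumes "qpos S" "T \<in> options_C' S"
  shows "grundy_formula T \<noteq> grundy_formula S"
  using assms(1)
proof (cases rule: grundy_formula_cases)
  case exceptional
  then show ?thesis using exceptional_option_C'_value assms(2) by simp
next
  case second
  then show ?thesis using second_largest_not_option_C'_value assms by simp
qed (use grundy_formula_le_Max[of T] options_C'_qpos_Max_less(2)[OF assms] in fastforce)+

lemma grundy_formula_pair_move_option_C':
  assumes "qpos S" "1 \<le> v" "v < Max S"
  shows "\<exists>T\<in>options_C' S. grundy_formula T =
    (if v = 2 \<and> Max S - 1 \<in> S then 0 else if v = 1 then 1
     else if Max S - 1 \<in> S then v - 1 else v)"
proof -
  note T = pair_move_option_C'[OF assms]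
  have "qpos (qresult S {Max S - v, Max S})"
    using options_C'_qpos_Max_less(1)[OF assms(1) T(1)] .
  then show ?thesis using T grundy_formula_with_zero by force
qed

lemma zero_option_C'_value:
  assumes "qpos S" "Max S = 1 \<or> 2 \<le> Max S \<and> Max S - 1 \<notin> S"
  shows "\<exists>T\<in>options_C' S. grundy_formula T = 0"
proof (cases "Max S \<le> 2")
  case True
  have "S \<subseteq> {0, Max S}"
  proof
    fix x assume "x \<in> S"
    then have "x \<le> Max S" "x \<noteq> Max S - 1 \<or> Max S = 1"
      using qpos_Max_ge[OF assms(1)] assms(2) by auto
    then show "x \<in> {0, Max S}" using True by (cases "Max S = 1") auto
  qed
  moreover have "1 \<le> Max S" using assms(2) by auto
  ultimately have "{0} \<in> options_C' S" using singleton_zero_in_options_C' assms(1) by blast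
  moreover have "grundy_formula {0} = 0" by (simp add: grundy_formula_def)
  ultimately show ?thesis by blast
next
  case False
  then have "3 \<le> Max S" "Max S - 1 \<notin> S" using assms(2) by auto
  then obtain T where "T \<in> options_C' S" "T = {1, 2} \<or> T = {0, 1, 2}"
    using ex_option_C'_one_two[OF assms(1)] by blast
  moreover have "grundy_formula T = 0" if "T = {1, 2} \<or> T = {0, 1, 2}" for T
    using that by (auto simp: grundy_formula_def)
  ultimately show ?thesis by blast
qed

lemma less_grundy_formula_option_value:
  assumes "qpos S" "m < grundy_formula S"
  shows "\<exists>T\<in>options_C' S. grundy_formula T = m"
  using assms(1)
proof (cases rule: grundy_formula_cases)
  case one
  then show ?thesis using zero_option_C'_value assms by simp
next
  case second
  then consider "m = 0" | "m = 1" | "2 \<le> m" "m + 1 < Max S" using assms(2) by linarith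
  then show ?thesis
  proof cases
    case 1
    then show ?thesis using grundy_formula_pair_move_option_C'[OF assms(1), of 2] second by simp
  next
    case 2
    then show ?thesis using grundy_formula_pair_move_option_C'[OF assms(1), of 1] second by simp
  next
    case 3
    then show ?thesis
      using grundy_formula_pair_move_option_C'[OF assms(1), of "m + 1"] second by simp
  qed
next
  case top
  then show ?thesis
    using zero_option_C'_value grundy_formula_pair_move_option_C'[OF assms(1), of m] assms
    by (cases "m = 0") force+
qed (use assms(2) in simp_all)

lemma grundy_C'_eq_grundy_formula: "qpos S \<Longrightarrow> grundy_C' S = grundy_formula S"
proof (induction "Max S" arbitrary: S rule: less_induct)
  case less
  have "grundy_C' ` options_C' S = grundy_formula ` options_C' S"
    using less options_C'_qpos_Max_less[OF less.prems] by (auto cong: image_cong)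
  moreover have "grundy_formula S \<notin> grundy_formula ` options_C' S"
    using grundy_formula_neq_option[OF less.prems] by force
  ultimately show ?case
    using grundy_C'_eq_mex[OF less.prems] less_grundy_formula_option_value[OF less.prems]
    by (force intro: mex_eqI)
qed

theorem lemma5:
  fixes S :: "nat set"
  assumes "qpos S"
  defines "k \<equiv> Max S"
  shows "grundy_C' S =
    (if S = {1, 2} \<or> S = {0, 1, 2} then 0
     else if k = 1 then 1
     else if k - 1 \<in> S then k - 1
     else k)"
  using grundy_C'_eq_grundy_formula[OF assms(1)] unfolding grundy_formula_def k_def .

end
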